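(* Let $\{\nu_t\}_{t\ge0}$ and $\{\widetilde\nu_t\}_{t\ge0}$ be weakly continuous $\rhd$-convolution semigroups in $\mathcal{P}(\mathbb{T})$ with $\nu_0=\widetilde\nu_0=\delta_1$, $\nu_1=\widetilde\nu_1$, and $\nu_1\ne\omega$. Let $B_2,\widetilde B_2:\mathbb{D}\to\mathbb{C}$ be analytic with nonpositive real parts such that, for all $t\ge0$ and $z\in\mathbb{D}$, $$\tfrac{d}{dt}\eta_{\nu_t}(z)=\eta_{\nu_t}(z)B_2(\eta_{\nu_t}(z)),\qquad \tfrac{d}{dt}\eta_{\widetilde\nu_t}(z)=\eta_{\widetilde\nu_t}(z)\widetilde B_2(\eta_{\widetilde\nu_t}(z)).$$ Let $s_1=B_2(0)$. (1) If $\nu_1$ is not a Dirac measure, there exists an integer $n$ such that $\widetilde B_2=\big(1+\frac{2\pi in}{s_1}\big)B_2$. (2) If $\nu_1$ is a Dirac measure, there exists an integer $n$ such that $\widetilde B_2=B_2+2\pi in$.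
   Context: $\mathbb{T}$ is the unit circle, $\mathbb{D}$ the open unit disc, $\mathcal{P}(\mathbb{T})$ the Borel probability measures on $\mathbb{T}$, $\omega$ the normalized Haar measure on $\mathbb{T}$, and $\delta_1$ the Dirac mass at $1$. For $\nu\in\mathcal{P}(\mathbb{T})$ let $\psi_\nu(z)=\int\frac{z\zeta}{1-z\zeta}d\nu(\zeta)$ and $\eta_\nu=\psi_\nu/(1+\psi_\nu)$ on $\mathbb{D}$; $\eta_\nu$ determines $\nu$. The multiplicative monotone convolution is defined by $\eta_{\nu\rhd\lambda}=\eta_\nu\circ\eta_\lambda$. A weakly continuous $\rhd$-convolution semigroup is a family $\{\nu_t\}_{t\ge0}$ with $\nu_{s+t}=\nu_s\rhd\nu_t$ for all $s,t\ge0$ and $t\mapsto\nu_t$ weakly continuous. *)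

theory Defs
  imports "HOL-Probability.Probability"
begin

definition circle_prob :: "complex measure \<Rightarrow> bool" where
  "circle_prob \<nu> \<longleftrightarrow> prob_space \<nu> \<and> sets \<nu> = sets (borel :: complex measure)
     \<and> emeasure \<nu> (sphere 0 1) = 1"

definition circle_haar :: "complex measure" where
  "circle_haar = distr (restrict_space lborel {0..1::real}) borel (\<lambda>t. cis (2 * pi * t))"

definition psi_fun :: "complex measure \<Rightarrow> complex \<Rightarrow> complex" where
  "psi_fun \<nu> z = (\<integral>\<zeta>. z * \<zeta> / (1 - z * \<zeta>) \<partial>\<nu>)"

definition eta_fun :: "complex measure \<Rightarrow> complex \<Rightarrow> complex" where
  "eta_fun \<nu> z = psi_fun \<nu> z / (1 + psi_fun \<nu> z)"

definition weakly_continuous_family :: "(real \<Rightarrow> complex measure) \<Rightarrow> bool" where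
  "weakly_continuous_family \<nu> \<longleftrightarrow>
     (\<forall>f :: complex \<Rightarrow> real. continuous_on UNIV f \<and> bounded (range f) \<longrightarrow>
        continuous_on {0..} (\<lambda>t. \<integral>x. f x \<partial>(\<nu> t)))"

text \<open>Weakly continuous multiplicative monotone convolution semigroup;
  \<open>\<nu>\<^sub>s \<rhd> \<nu>\<^sub>t\<close> is the measure with eta-transform \<open>\<eta>\<^sub>\<nu>\<^sub>s \<circ> \<eta>\<^sub>\<nu>\<^sub>t\<close>, so
  \<open>\<nu>\<^sub>s\<^sub>+\<^sub>t = \<nu>\<^sub>s \<rhd> \<nu>\<^sub>t\<close> means exactly the identity of eta-transforms below.\<close>
definition monotone_semigroup :: "(real \<Rightarrow> complex measure) \<Rightarrow> bool" where
  "monotone_semigroup \<nu> \<longleftrightarrow>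
     (\<forall>t\<ge>0. circle_prob (\<nu> t)) \<and>
     (\<forall>s\<ge>0. \<forall>t\<ge>0. \<forall>z\<in>ball 0 1. eta_fun (\<nu> (s + t)) z = eta_fun (\<nu> s) (eta_fun (\<nu> t) z)) \<and>
     weakly_continuous_family \<nu>"

definition is_dirac :: "complex measure \<Rightarrow> bool" where
  "is_dirac \<mu> \<longleftrightarrow> (\<exists>\<zeta>. \<mu> = return borel \<zeta>)"

end

theory Submission
  imports Defs "HOL-Complex_Analysis.Complex_Analysis"
begin

text \<open>Along the flow, \<open>\<eta>\<^sub>t(z) = z exp (\<integral>\<^sub>0\<^sup>t B(\<eta>\<^sub>s(z)) ds)\<close>; letting \<open>z \<rightarrow> 0\<close> shows that the
  first moment \<open>m = \<eta>\<^sub>1'(0)\<close> of \<open>\<nu>\<^sub>1\<close> equals \<open>exp (B(0))\<close>, and likewise \<open>exp (B'(0))\<close>, so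
  \<open>B'(0) - B(0) \<in> 2\<pi>i\<int>\<close>. Differentiating \<open>\<eta>\<^sub>1\<^sub>+\<^sub>t = \<eta>\<^sub>1 \<circ> \<eta>\<^sub>t\<close> at \<open>t = 0\<close> shows that
  \<open>f = \<eta>\<^sub>1\<close> transports both vector fields \<open>z B(z)\<close> and \<open>z B'(z)\<close>:
  \<open>f(w) B(f(w)) = f'(w) w B(w)\<close>. Hence \<open>B'/B\<close> is invariant under \<open>f\<close>.
  If \<open>\<nu>\<^sub>1\<close> is not a point mass then \<open>0 < |m| < 1\<close>, so 0 is an attracting fixed point of \<open>f\<close>
  and the invariant ratio is constant. If \<open>\<nu>\<^sub>1\<close> is a point mass then all \<open>\<eta>\<^sub>t\<close>, \<open>t \<le> 1\<close>, are
  rotations, which forces \<open>Re B = 0\<close>, and \<open>B\<close> is constant by the open mapping theorem.\<close>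

lemma circle_probD:
  assumes "circle_prob \<nu>"
  shows "prob_space \<nu>" "sets \<nu> = sets borel" "space \<nu> = UNIV" "AE \<zeta> in \<nu>. norm \<zeta> = 1"
proof -
  show P: "prob_space \<nu>" and S: "sets \<nu> = sets borel"
    using assms by (auto simp: circle_prob_def)
  show "space \<nu> = UNIV" using sets_eq_imp_space_eq[OF S] by simp
  interpret prob_space \<nu> by (fact P)
  have "AE \<zeta> in \<nu>. \<zeta> \<in> sphere 0 1"
    using assms S by (intro AE_prob_1) (simp add: circle_prob_def emeasure_eq_measure)
  then show "AE \<zeta> in \<nu>. norm \<zeta> = 1" by simp
qed

lemma circle_prob_integrable:
  fixes g :: "complex \<Rightarrow> complex"
  assumes \<nu>: "circle_prob \<nu>" and "g \<in> borel_measurable borel"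
    and bound: "\<And>\<zeta>. norm \<zeta> = 1 \<Longrightarrow> norm (g \<zeta>) \<le> C"
  shows "integrable \<nu> g"
proof -
  interpret prob_space \<nu> by (rule circle_probD(1)[OF \<nu>])
  have "measurable \<nu> borel = measurable borel (borel :: complex measure)"
    by (rule measurable_cong_sets) (simp_all add: circle_probD(2)[OF \<nu>])
  then have "g \<in> borel_measurable \<nu>" using assms(2) by simp
  moreover have "AE \<zeta> in \<nu>. norm (g \<zeta>) \<le> norm C"
    using circle_probD(4)[OF \<nu>]
    by eventually_elim (metis bound abs_ge_self order_trans real_norm_def)
  ultimately show ?thesis
    by (rule Bochner_Integration.integrable_bound[OF integrable_const])
qed

lemma circle_prob_norm_integral_le:
  fixes g :: "complex \<Rightarrow> complex"
  assumes \<nu>: "circle_prob \<nu>" and "g \<in> borel_measurable borel"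
    and bound: "\<And>\<zeta>. norm \<zeta> = 1 \<Longrightarrow> norm (g \<zeta>) \<le> C"
  shows "norm (\<integral>\<zeta>. g \<zeta> \<partial>\<nu>) \<le> C"
proof -
  interpret prob_space \<nu> by (rule circle_probD(1)[OF \<nu>])
  have "norm (\<integral>\<zeta>. g \<zeta> \<partial>\<nu>) \<le> (\<integral>\<zeta>. norm (g \<zeta>) \<partial>\<nu>)"
    by (rule integral_norm_bound)
  also have "\<dots> \<le> (\<integral>\<zeta>. C \<partial>\<nu>)"
  proof (rule integral_mono_AE)
    show "AE \<zeta> in \<nu>. norm (g \<zeta>) \<le> C"
      using circle_probD(4)[OF \<nu>] by eventually_elim (rule bound)
  qed (use circle_prob_integrable[OF assms] in simp_all)
  also have "\<dots> = C" by (simp add: prob_space)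
  finally show ?thesis .
qed

lemma norm_one_minus_mult_ge:
  fixes z \<zeta> :: complex
  assumes "norm \<zeta> = 1"
  shows "1 - norm z \<le> norm (1 - z * \<zeta>)"
  using norm_triangle_ineq2[of 1 "z * \<zeta>"] assms by (simp add: norm_mult)

lemma one_minus_mult_nonzero:
  fixes z \<zeta> :: complex
  assumes "norm \<zeta> = 1" "norm z < 1"
  shows "1 - z * \<zeta> \<noteq> 0"
  using norm_one_minus_mult_ge[OF assms(1), of z] assms(2) by auto

lemma norm_psi_kernel_le:
  fixes z \<zeta> :: complex
  assumes "norm \<zeta> = 1" "norm z < 1"
  shows "norm (z * \<zeta> / (1 - z * \<zeta>)) \<le> 1 / (1 - norm z)"
proof -
  have "norm (z * \<zeta> / (1 - z * \<zeta>)) = norm z / norm (1 - z * \<zeta>)"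
    using assms by (simp add: norm_divide norm_mult)
  also have "\<dots> \<le> 1 / (1 - norm z)"
    using norm_one_minus_mult_ge[OF assms(1), of z] assms by (intro frac_le) auto
  finally show ?thesis .
qed

lemma norm_psi_quotient_le:
  fixes w z \<zeta> :: complex
  assumes "norm \<zeta> = 1" "norm w < 1" "norm z < 1"
  shows "norm (\<zeta> / ((1 - w * \<zeta>) * (1 - z * \<zeta>))) \<le> 1 / ((1 - norm w) * (1 - norm z))"
proof -
  have "norm (\<zeta> / ((1 - w * \<zeta>) * (1 - z * \<zeta>))) = 1 / (norm (1 - w * \<zeta>) * norm (1 - z * \<zeta>))"
    using assms by (simp add: norm_divide norm_mult)
  also have "\<dots> \<le> 1 / ((1 - norm w) * (1 - norm z))"
  proof (rule divide_left_mono)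
    show "(1 - norm w) * (1 - norm z) \<le> norm (1 - w * \<zeta>) * norm (1 - z * \<zeta>)"
      using norm_one_minus_mult_ge[OF assms(1)] assms by (intro mult_mono) auto
    show "0 < norm (1 - w * \<zeta>) * norm (1 - z * \<zeta>) * ((1 - norm w) * (1 - norm z))"
      using one_minus_mult_nonzero[OF assms(1)] assms by (intro mult_pos_pos) auto
  qed simp
  finally show ?thesis .
qed

lemma norm_psi_quotient_diff_le:
  fixes z z0 \<zeta> :: complex
  assumes "norm \<zeta> = 1" "norm z \<le> r" "r < 1" "norm z0 < 1"
  shows "norm (\<zeta> / ((1 - z * \<zeta>) * (1 - z0 * \<zeta>)) - \<zeta> / ((1 - z0 * \<zeta>) * (1 - z0 * \<zeta>)))
     \<le> norm (z - z0) / ((1 - r) * (1 - norm z0)^2)"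
proof -
  have z: "norm z < 1" using assms by simp
  have nz: "1 - z * \<zeta> \<noteq> 0" "1 - z0 * \<zeta> \<noteq> 0"
    using one_minus_mult_nonzero assms z by auto
  have "\<zeta> / ((1 - z * \<zeta>) * (1 - z0 * \<zeta>)) - \<zeta> / ((1 - z0 * \<zeta>) * (1 - z0 * \<zeta>))
        = (z - z0) * (\<zeta> * \<zeta>) / ((1 - z * \<zeta>) * (1 - z0 * \<zeta>) * (1 - z0 * \<zeta>))"
    using nz by (simp add: divide_simps) (simp add: algebra_simps)
  also have "norm \<dots> = norm (z - z0) / (norm (1 - z * \<zeta>) * norm (1 - z0 * \<zeta>) * norm (1 - z0 * \<zeta>))"
    using assms by (simp add: norm_mult norm_divide)
  also have "\<dots> \<le> norm (z - z0) / ((1 - r) * (1 - norm z0) * (1 - norm z0))"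
  proof (rule frac_le)
    have "1 - r \<le> norm (1 - z * \<zeta>)"
      using norm_one_minus_mult_ge[OF assms(1), of z] assms by linarith
    note le = mult_mono[OF mult_mono[OF this norm_one_minus_mult_ge[OF assms(1)]]
                          norm_one_minus_mult_ge[OF assms(1)]]
    show "(1 - r) * (1 - norm z0) * (1 - norm z0)
        \<le> norm (1 - z * \<zeta>) * norm (1 - z0 * \<zeta>) * norm (1 - z0 * \<zeta>)"
      using assms by (intro le) auto
    show "0 < (1 - r) * (1 - norm z0) * (1 - norm z0)" using assms by simp
  qed auto
  finally show ?thesis by (simp add: power2_eq_square mult.assoc)
qed

lemma psi_kernel_integrable:
  assumes "circle_prob \<nu>" "norm z < 1"
  shows "integrable \<nu> (\<lambda>\<zeta>. z * \<zeta> / (1 - z * \<zeta>))"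
  using norm_psi_kernel_le assms by (intro circle_prob_integrable[where C = "1 / (1 - norm z)"]) auto

lemma psi_quotient_integrable:
  assumes "circle_prob \<nu>" "norm w < 1" "norm z < 1"
  shows "integrable \<nu> (\<lambda>\<zeta>. \<zeta> / ((1 - w * \<zeta>) * (1 - z * \<zeta>)))"
  using norm_psi_quotient_le assms
  by (intro circle_prob_integrable[where C = "1 / ((1 - norm w) * (1 - norm z))"]) auto

lemma psi_fun_diff:
  assumes \<nu>: "circle_prob \<nu>" and "norm z < 1" "norm z0 < 1"
  shows "psi_fun \<nu> z - psi_fun \<nu> z0 = (z - z0) * (\<integral>\<zeta>. \<zeta> / ((1 - z * \<zeta>) * (1 - z0 * \<zeta>)) \<partial>\<nu>)"
proof -
  have "psi_fun \<nu> z - psi_fun \<nu> z0 = (\<integral>\<zeta>. z * \<zeta> / (1 - z * \<zeta>) - z0 * \<zeta> / (1 - z0 * \<zeta>) \<partial>\<nu>)"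
    unfolding psi_fun_def using psi_kernel_integrable assms
    by (intro Bochner_Integration.integral_diff[symmetric])
  also have "\<dots> = (\<integral>\<zeta>. (z - z0) * (\<zeta> / ((1 - z * \<zeta>) * (1 - z0 * \<zeta>))) \<partial>\<nu>)"
  proof (rule integral_cong_AE)
    show "AE \<zeta> in \<nu>. z * \<zeta> / (1 - z * \<zeta>) - z0 * \<zeta> / (1 - z0 * \<zeta>)
                    = (z - z0) * (\<zeta> / ((1 - z * \<zeta>) * (1 - z0 * \<zeta>)))"
      using circle_probD(4)[OF \<nu>]
    proof eventually_elim
      case (elim \<zeta>)
      then have "1 - z * \<zeta> \<noteq> 0" "1 - z0 * \<zeta> \<noteq> 0"
        using one_minus_mult_nonzero assms by auto
      then show ?case by (simp add: divide_simps) (simp add: algebra_simps)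
    qed
  qed (use circle_probD(2)[OF \<nu>] in simp_all)
  also have "\<dots> = (z - z0) * (\<integral>\<zeta>. \<zeta> / ((1 - z * \<zeta>) * (1 - z0 * \<zeta>)) \<partial>\<nu>)"
    by (rule integral_mult_right_zero)
  finally show ?thesis .
qed

lemma psi_fun_has_field_derivative:
  assumes \<nu>: "circle_prob \<nu>" and z0: "norm z0 < 1"
  shows "(psi_fun \<nu> has_field_derivative (\<integral>\<zeta>. \<zeta> / (1 - z0 * \<zeta>)^2 \<partial>\<nu>)) (at z0)"
proof -
  define Q where "Q z = (\<integral>\<zeta>. \<zeta> / ((1 - z * \<zeta>) * (1 - z0 * \<zeta>)) \<partial>\<nu>)" for z
  define r where "r = (1 + norm z0) / 2"
  have r: "norm z0 < r" "r < 1" using z0 by (auto simp: r_def)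
  have ball: "\<forall>\<^sub>F z in at z0. z \<in> ball z0 (r - norm z0) \<and> z \<noteq> z0"
    using eventually_at_ball'[of "r - norm z0" z0 UNIV] r by simp
  then have near: "\<forall>\<^sub>F z in at z0. norm z < r"
    by eventually_elim (smt (verit) mem_ball dist_norm norm_triangle_sub norm_minus_commute)
  have "((\<lambda>z. Q z - Q z0) \<longlongrightarrow> 0) (at z0)"
  proof (rule Lim_null_comparison)
    show "\<forall>\<^sub>F z in at z0. norm (Q z - Q z0) \<le> norm (z - z0) / ((1 - r) * (1 - norm z0)^2)"
      using near
    proof eventually_elim
      case (elim z)
      have "Q z - Q z0 = (\<integral>\<zeta>. \<zeta> / ((1 - z * \<zeta>) * (1 - z0 * \<zeta>))
                              - \<zeta> / ((1 - z0 * \<zeta>) * (1 - z0 * \<zeta>)) \<partial>\<nu>)"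
        unfolding Q_def using psi_quotient_integrable \<nu> elim r z0
        by (intro Bochner_Integration.integral_diff[symmetric]) auto
      also have "norm \<dots> \<le> norm (z - z0) / ((1 - r) * (1 - norm z0)^2)"
        using norm_psi_quotient_diff_le elim r z0 by (intro circle_prob_norm_integral_le[OF \<nu>]) auto
      finally show ?case .
    qed
    show "((\<lambda>z. norm (z - z0) / ((1 - r) * (1 - norm z0)^2)) \<longlongrightarrow> 0) (at z0)"
      by (intro tendsto_divide_zero tendsto_norm_zero LIM_zero tendsto_ident_at)
  qed
  then have "(Q \<longlongrightarrow> Q z0) (at z0)" by (rule LIM_zero_cancel)
  moreover have "\<forall>\<^sub>F z in at z0. Q z = (psi_fun \<nu> z - psi_fun \<nu> z0) / (z - z0)"
    using near ball
    by eventually_elim (use psi_fun_diff[OF \<nu> _ z0] r in \<open>auto simp: Q_def\<close>)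
  ultimately show ?thesis
    unfolding has_field_derivative_iff
    by (auto simp: Q_def power2_eq_square intro: Lim_transform_eventually)
qed

text \<open>\<open>Re (w / (1 - w)) + 1/2 = (1 - |w|\<^sup>2) / (2 |1 - w|\<^sup>2)\<close> and \<open>|1 - w| \<le> 2\<close>.\<close>

lemma Re_div_one_minus_ge:
  fixes w :: complex
  assumes "norm w < 1"
  shows "(1 - (norm w)^2) / 8 - 1 / 2 \<le> Re (w / (1 - w))"
proof -
  obtain a b where w: "w = Complex a b" by (cases w)
  have n2: "(norm w)^2 = a^2 + b^2" by (simp add: w cmod_power2)
  have "(norm w)^2 < 1" using assms by (simp add: power_less_one_iff)
  then have lt: "a^2 + b^2 < 1" using n2 by simp
  then have "\<bar>a\<bar> < 1" using zero_le_power2[of b] abs_square_less_1 by fastforce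
  define D where "D = (1 - a)^2 + b^2"
  have De: "D = 1 - 2 * a + (a^2 + b^2)" by (simp add: D_def power2_diff)
  have "0 < (1 - a)^2" using \<open>\<bar>a\<bar> < 1\<close> by simp
  then have "0 < D" unfolding D_def using zero_le_power2[of b] by linarith
  moreover have "D \<le> 4" using De lt \<open>\<bar>a\<bar> < 1\<close> by (simp add: abs_less_iff)
  ultimately have D: "0 < D" "D \<le> 4" by simp_all
  have "Re (w / (1 - w)) = (a - (a^2 + b^2)) / D"
    by (simp add: w D_def Re_divide power2_eq_square algebra_simps)
  moreover have "D * ((1 - (a^2 + b^2)) / 8 - 1 / 2) \<le> a - (a^2 + b^2)"
  proof -
    have "D * (1 - (a^2 + b^2)) \<le> 4 * (1 - (a^2 + b^2))"
      using D lt by (intro mult_right_mono) auto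
    moreover have "a - (a^2 + b^2) = - D / 2 + (1 - (a^2 + b^2)) / 2"
      using De by (simp add: field_simps)
    moreover have "D * ((1 - (a^2 + b^2)) / 8 - 1 / 2) = D * (1 - (a^2 + b^2)) / 8 - D / 2"
      by (simp add: algebra_simps)
    ultimately show ?thesis by linarith
  qed
  ultimately show ?thesis
    unfolding n2 using D by (simp add: pos_le_divide_eq mult.commute)
qed

lemma Re_psi_fun_ge:
  assumes \<nu>: "circle_prob \<nu>" and z: "norm z < 1"
  shows "(1 - (norm z)^2) / 8 - 1 / 2 \<le> Re (psi_fun \<nu> z)"
proof -
  interpret prob_space \<nu> by (rule circle_probD(1)[OF \<nu>])
  note int = psi_kernel_integrable[OF assms]
  have "Re (psi_fun \<nu> z) = (\<integral>\<zeta>. Re (z * \<zeta> / (1 - z * \<zeta>)) \<partial>\<nu>)"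
    unfolding psi_fun_def by (rule integral_bounded_linear[OF bounded_linear_Re int, symmetric])
  also have "\<dots> \<ge> (1 - (norm z)^2) / 8 - 1 / 2"
  proof (rule integral_ge_const)
    show "AE \<zeta> in \<nu>. (1 - (norm z)^2) / 8 - 1 / 2 \<le> Re (z * \<zeta> / (1 - z * \<zeta>))"
      using circle_probD(4)[OF \<nu>]
    proof eventually_elim
      case (elim \<zeta>)
      then have "norm (z * \<zeta>) = norm z" by (simp add: norm_mult)
      then show ?case using Re_div_one_minus_ge[of "z * \<zeta>"] z by simp
    qed
  qed (use int in simp)
  finally show ?thesis .
qed

lemma norm_psi_fun_less:
  assumes "circle_prob \<nu>" "norm z < 1"
  shows "norm (psi_fun \<nu> z) < norm (1 + psi_fun \<nu> z)"
proof -
  define p where "p = psi_fun \<nu> z"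
  have "(norm z)^2 < 1" using assms(2) by (simp add: power_less_one_iff)
  then have "0 < (1 - (norm z)^2) / 8" by simp
  then have "- 1 / 2 < Re p" using Re_psi_fun_ge[OF assms] unfolding p_def by linarith
  moreover have "(norm (1 + p))^2 = (norm p)^2 + (1 + 2 * Re p)"
    unfolding cmod_power2 by (simp add: power2_eq_square algebra_simps)
  ultimately have "(norm p)^2 < (norm (1 + p))^2" by simp
  then show ?thesis unfolding p_def by (rule power2_less_imp_less) simp
qed

lemma one_plus_psi_fun_nonzero:
  "circle_prob \<nu> \<Longrightarrow> norm z < 1 \<Longrightarrow> 1 + psi_fun \<nu> z \<noteq> 0"
  using norm_psi_fun_less by fastforce

lemma norm_eta_fun_less_one:
  assumes "circle_prob \<nu>" "norm z < 1"
  shows "norm (eta_fun \<nu> z) < 1"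
  using norm_psi_fun_less[OF assms] by (simp add: eta_fun_def norm_divide divide_less_eq_1)

lemma eta_fun_0 [simp]: "eta_fun \<nu> 0 = 0"
  by (simp add: eta_fun_def psi_fun_def)

lemma eta_fun_holomorphic:
  assumes \<nu>: "circle_prob \<nu>"
  shows "eta_fun \<nu> holomorphic_on ball 0 1"
proof -
  have "psi_fun \<nu> holomorphic_on ball 0 1"
    unfolding holomorphic_on_open[OF open_ball] by (meson mem_ball_0 psi_fun_has_field_derivative[OF \<nu>])
  then have "(\<lambda>z. psi_fun \<nu> z / (1 + psi_fun \<nu> z)) holomorphic_on ball 0 1"
    using one_plus_psi_fun_nonzero[OF \<nu>] by (intro holomorphic_intros) auto
  then show ?thesis by (simp add: eta_fun_def[abs_def])
qed

lemma eta_fun_has_field_derivative_0: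
  assumes "circle_prob \<nu>"
  shows "(eta_fun \<nu> has_field_derivative (\<integral>\<zeta>. \<zeta> \<partial>\<nu>)) (at 0)"
proof -
  note d = psi_fun_has_field_derivative[OF assms, of 0]
  have "psi_fun \<nu> 0 = 0" by (simp add: psi_fun_def)
  then have "((\<lambda>z. psi_fun \<nu> z / (1 + psi_fun \<nu> z)) has_field_derivative (\<integral>\<zeta>. \<zeta> \<partial>\<nu>)) (at 0)"
    using DERIV_divide[OF d DERIV_add[OF DERIV_const[of 1] d]] by simp
  then show ?thesis by (simp add: eta_fun_def[abs_def])
qed

lemma eta_fun_return:
  assumes "norm \<zeta> = 1" "norm z < 1"
  shows "eta_fun (return borel \<zeta>) z = \<zeta> * z"
proof -
  have "1 - z * \<zeta> \<noteq> 0" using one_minus_mult_nonzero assms by auto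
  then have "1 + z * \<zeta> / (1 - z * \<zeta>) = 1 / (1 - z * \<zeta>)" by (simp add: field_simps)
  moreover have "psi_fun (return borel \<zeta>) z = z * \<zeta> / (1 - z * \<zeta>)"
    unfolding psi_fun_def by (rule integral_return) auto
  ultimately show ?thesis using \<open>1 - z * \<zeta> \<noteq> 0\<close> by (simp add: eta_fun_def)
qed

lemma norm_eq_1_if_circle_prob_return:
  assumes "circle_prob (return borel \<zeta>)"
  shows "norm \<zeta> = 1"
proof -
  have "emeasure (return borel \<zeta>) (sphere 0 1) = 1" using assms by (simp add: circle_prob_def)
  then show ?thesis by (cases "\<zeta> \<in> sphere 0 1") auto
qed

lemma norm_first_moment_le:
  "circle_prob \<nu> \<Longrightarrow> norm (\<integral>\<zeta>. \<zeta> \<partial>\<nu>) \<le> 1"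
  by (rule circle_prob_norm_integral_le) auto

lemma eq_if_Re_cnj_mult_eq_1:
  fixes x a :: complex
  assumes "norm x = 1" "norm a = 1" "Re (cnj a * x) = 1"
  shows "x = a"
proof -
  have "(norm (x - a))^2 = (norm x)^2 + (norm a)^2 - 2 * Re (cnj a * x)"
    by (simp add: cmod_power2 power2_diff algebra_simps)
  also have "\<dots> = 0" using assms by simp
  finally show ?thesis by simp
qed

text \<open>\<open>Re (cnj m \<zeta>) \<le> 1\<close> on the circle, and its mean is \<open>|m|\<^sup>2 = 1\<close>.\<close>

lemma circle_prob_eq_return_first_moment:
  assumes \<nu>: "circle_prob \<nu>" and norm_m: "norm (\<integral>\<zeta>. \<zeta> \<partial>\<nu>) = 1"
  shows "\<nu> = return borel (\<integral>\<zeta>. \<zeta> \<partial>\<nu>)"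
proof -
  interpret prob_space \<nu> by (rule circle_probD(1)[OF \<nu>])
  define m where "m = (\<integral>\<zeta>. \<zeta> \<partial>\<nu>)"
  have int: "integrable \<nu> (\<lambda>\<zeta>. cnj m * \<zeta>)"
    using circle_prob_integrable[OF \<nu>, of "\<lambda>\<zeta>. \<zeta>" 1] by simp
  have "(\<integral>\<zeta>. Re (cnj m * \<zeta>) \<partial>\<nu>) = Re (\<integral>\<zeta>. cnj m * \<zeta> \<partial>\<nu>)"
    by (rule integral_bounded_linear[OF bounded_linear_Re int])
  also have "\<dots> = Re (cnj m * m)" by (simp only: integral_mult_right_zero m_def)
  also have "\<dots> = (norm m)^2" by (simp only: cmod_power2) (simp add: power2_eq_square)
  also have "\<dots> = 1" using norm_m by (simp add: m_def)
  finally have Re_1: "(\<integral>\<zeta>. Re (cnj m * \<zeta>) \<partial>\<nu>) = 1" .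
  have int_Re: "integrable \<nu> (\<lambda>\<zeta>. Re (cnj m * \<zeta>))" using int by (rule integrable_Re)
  have "(\<integral>\<zeta>. 1 - Re (cnj m * \<zeta>) \<partial>\<nu>) = (\<integral>\<zeta>. 1 \<partial>\<nu>) - (\<integral>\<zeta>. Re (cnj m * \<zeta>) \<partial>\<nu>)"
    by (rule Bochner_Integration.integral_diff[OF integrable_const int_Re])
  also have "\<dots> = 0" using Re_1 by (simp add: prob_space)
  finally have "(\<integral>\<zeta>. 1 - Re (cnj m * \<zeta>) \<partial>\<nu>) = 0" .
  moreover have nonneg: "AE \<zeta> in \<nu>. 0 \<le> 1 - Re (cnj m * \<zeta>)"
    using circle_probD(4)[OF \<nu>]
  proof eventually_elim
    case (elim \<zeta>)
    then show ?case
      using complex_Re_le_cmod[of "cnj m * \<zeta>"] norm_m by (simp add: norm_mult m_def)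
  qed
  ultimately have "AE \<zeta> in \<nu>. 1 - Re (cnj m * \<zeta>) = 0"
    using integral_nonneg_eq_0_iff_AE[OF Bochner_Integration.integrable_diff[OF integrable_const int_Re] nonneg]
    by simp
  then have "AE \<zeta> in \<nu>. \<zeta> = m"
    using circle_probD(4)[OF \<nu>]
    by eventually_elim (use eq_if_Re_cnj_mult_eq_1 norm_m m_def in auto)
  then have "\<nu> = return \<nu> m" by (rule AE_eq_constD)
  then show ?thesis using return_cong[OF circle_probD(2)[OF \<nu>]] by (simp add: m_def)
qed

lemma holomorphic_constant_on_if_Re_eq_0:
  fixes f :: "complex \<Rightarrow> complex"
  assumes "f holomorphic_on S" "open S" "connected S" "open U" "U \<subseteq> S" "u \<in> U"
    and Re_0: "\<And>z. z \<in> U \<Longrightarrow> Re (f z) = 0"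
  shows "f constant_on S"
proof (rule ccontr)
  assume "\<not> f constant_on S"
  then have "open (f ` U)" by (rule open_mapping_thm[OF assms(1-5)])
  then obtain e where "0 < e" and e: "ball (f u) e \<subseteq> f ` U"
    using assms(6) open_contains_ball_eq by blast
  have "f u + of_real (e / 2) \<in> ball (f u) e" using \<open>0 < e\<close> by (simp add: dist_norm)
  then obtain v where "v \<in> U" "f v = f u + of_real (e / 2)" using e by auto
  then have "Re (f v) = Re (f u) + e / 2" by simp
  then show False using Re_0 \<open>v \<in> U\<close> assms(6) \<open>0 < e\<close> by simp
qed

lemma contraction_near_attracting_fixed_point:
  fixes f :: "complex \<Rightarrow> complex"
  assumes "(f has_field_derivative m) (at 0)" "f 0 = 0" "norm m < 1"
  obtains r \<rho> where "0 < r" "0 \<le> \<rho>" "\<rho> < 1" "\<And>w. norm w < r \<Longrightarrow> norm (f w) \<le> \<rho> * norm w"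
proof -
  define \<rho> where "\<rho> = (1 + norm m) / 2"
  have "((\<lambda>w. f w / w) \<longlongrightarrow> m) (at 0)"
    using assms(1,2) by (simp add: has_field_derivative_iff)
  moreover have "0 < \<rho> - norm m" using assms(3) by (simp add: \<rho>_def)
  ultimately have "\<forall>\<^sub>F w in at 0. dist (f w / w) m < \<rho> - norm m" by (rule tendstoD)
  then obtain r where "0 < r" and r: "\<forall>w\<in>UNIV. w \<noteq> 0 \<and> dist w 0 < r \<longrightarrow> dist (f w / w) m < \<rho> - norm m"
    unfolding eventually_at by blast
  have "norm (f w) \<le> \<rho> * norm w" if "norm w < r" for w
  proof (cases "w = 0")
    case False
    have "norm (f w / w) \<le> norm m + dist (f w / w) m"
      using norm_triangle_sub[of "f w / w" m] by (simp add: dist_norm)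
    then have "norm (f w / w) \<le> \<rho>" using r False that by force
    then show ?thesis using False by (simp add: norm_divide divide_le_eq)
  qed (simp add: assms(2))
  moreover have "0 \<le> \<rho>" "\<rho> < 1" using assms(3) by (simp_all add: \<rho>_def)
  ultimately show ?thesis using that \<open>0 < r\<close> by blast
qed

lemma eventually_nonzero_near_fixed_point:
  fixes f :: "complex \<Rightarrow> complex"
  assumes "(f has_field_derivative m) (at 0)" "f 0 = 0" "m \<noteq> 0"
  shows "\<forall>\<^sub>F w in at 0. f w \<noteq> 0"
proof -
  have "((\<lambda>w. f w / w) \<longlongrightarrow> m) (at 0)"
    using assms(1,2) by (simp add: has_field_derivative_iff)
  then have "\<forall>\<^sub>F w in at 0. f w / w \<noteq> 0" using assms(3) by (rule tendsto_imp_eventually_ne)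
  then show ?thesis by eventually_elim auto
qed

lemma invariant_constant_near_attracting_fixed_point:
  fixes f :: "'a::real_normed_vector \<Rightarrow> 'a" and R :: "'a \<Rightarrow> 'b::t2_space"
  assumes \<rho>: "0 \<le> \<rho>" "\<rho> < 1" and contr: "\<And>w. norm w < r \<Longrightarrow> norm (f w) \<le> \<rho> * norm w"
    and inv: "\<And>w. norm w < r \<Longrightarrow> R (f w) = R w" and "isCont R 0" and w: "norm w < r"
  shows "R w = R 0"
proof -
  have iter: "norm ((f ^^ k) w) \<le> \<rho> ^ k * norm w \<and> R ((f ^^ k) w) = R w" for k
  proof (induction k)
    case (Suc k)
    have "\<rho> ^ k * norm w \<le> norm w" using \<rho> by (simp add: mult_left_le_one_le power_le_one)
    then have "norm ((f ^^ k) w) < r" using Suc w by linarith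
    then have "norm ((f ^^ Suc k) w) \<le> \<rho> * norm ((f ^^ k) w)"
      and "R ((f ^^ Suc k) w) = R ((f ^^ k) w)" by (simp_all add: contr inv)
    moreover have "\<rho> * norm ((f ^^ k) w) \<le> \<rho> ^ Suc k * norm w"
      using mult_left_mono[OF conjunct1[OF Suc.IH] \<rho>(1)] by (simp add: mult.assoc)
    ultimately show ?case using Suc.IH by auto
  qed simp
  have "\<forall>\<^sub>F k in sequentially. norm ((f ^^ k) w) \<le> \<rho> ^ k * norm w"
    using iter by (intro always_eventually allI) blast
  moreover have "(\<lambda>k. \<rho> ^ k * norm w) \<longlonglongrightarrow> 0"
    using \<rho> by (intro tendsto_mult_left_zero LIMSEQ_power_zero) simp
  ultimately have "(\<lambda>k. (f ^^ k) w) \<longlonglongrightarrow> 0" by (rule Lim_null_comparison)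
  then have "(\<lambda>k. R ((f ^^ k) w)) \<longlonglongrightarrow> R 0" by (rule isCont_tendsto_compose[OF \<open>isCont R 0\<close>])
  moreover have "(\<lambda>k. R ((f ^^ k) w)) = (\<lambda>k. R w)" using iter by blast
  ultimately show ?thesis by (simp add: LIMSEQ_const_iff)
qed

lemma ratio_eq_if_transported:
  fixes x y d gx gy hx hy :: "'a::field"
  assumes "y * gy = x * gx * d" "y * hy = x * hx * d" "y \<noteq> 0" "gy \<noteq> 0"
  shows "hy / gy = hx / gx"
proof -
  have "x * d \<noteq> 0" using assms(1,3,4) by auto
  have "hy / gy = (y * hy) / (y * gy)" using assms(3) by simp
  also have "\<dots> = (x * d * hx) / (x * d * gx)" using assms(1,2) by (simp add: ac_simps)
  also have "\<dots> = hx / gx" using \<open>x * d \<noteq> 0\<close> by simp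
  finally show ?thesis .
qed

text \<open>The ratio \<open>h / g\<close> is invariant under \<open>f\<close>, hence constant near the attracting fixed point.\<close>

lemma proportional_near_attracting_fixed_point:
  fixes f g h :: "complex \<Rightarrow> complex"
  assumes f: "(f has_field_derivative m) (at 0)" "f 0 = 0" "m \<noteq> 0" "norm m < 1"
    and cont: "isCont g 0" "isCont h 0" and "g 0 \<noteq> 0"
    and g_transport: "\<And>w. w \<in> ball 0 1 \<Longrightarrow> f w * g (f w) = w * g w * deriv f w"
    and h_transport: "\<And>w. w \<in> ball 0 1 \<Longrightarrow> f w * h (f w) = w * h w * deriv f w"
  obtains r where "0 < r" "\<And>w. w \<in> ball 0 r \<Longrightarrow> h w = h 0 / g 0 * g w"
proof -
  obtain r1 \<rho> where \<rho>: "0 < r1" "0 \<le> \<rho>" "\<rho> < 1"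
    and contr: "\<And>w. norm w < r1 \<Longrightarrow> norm (f w) \<le> \<rho> * norm w"
    using contraction_near_attracting_fixed_point[OF f(1,2,4)] by blast
  have "\<forall>\<^sub>F w in at 0. g w \<noteq> 0"
    using cont(1) \<open>g 0 \<noteq> 0\<close> by (intro tendsto_imp_eventually_ne) (simp_all add: isCont_def)
  moreover have "\<forall>\<^sub>F w in at 0. w \<in> ball 0 (min r1 1)"
    using eventually_at_ball[of "min r1 1" 0 UNIV] \<rho>(1) by simp
  ultimately have "\<forall>\<^sub>F w in at 0. f w \<noteq> 0 \<and> g w \<noteq> 0 \<and> norm w < r1 \<and> norm w < 1"
    using eventually_nonzero_near_fixed_point[OF f(1-3)] by eventually_elim simp
  then obtain r where "0 < r"
    and "\<forall>w\<in>UNIV. w \<noteq> 0 \<and> dist w 0 < r \<longrightarrow> f w \<noteq> 0 \<and> g w \<noteq> 0 \<and> norm w < r1 \<and> norm w < 1"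
    unfolding eventually_at by blast
  then have r: "\<And>w. w \<noteq> 0 \<Longrightarrow> norm w < r \<Longrightarrow> f w \<noteq> 0 \<and> g w \<noteq> 0 \<and> norm w < r1 \<and> norm w < 1"
    by simp
  have contr_r: "norm (f w) \<le> \<rho> * norm w" if "norm w < r" for w
    using contr r that f(2) by (cases "w = 0") auto
  define R where "R w = h w / g w" for w
  have inv: "R (f w) = R w" if w: "norm w < r" for w
  proof (cases "w = 0")
    case False
    then have "f w \<noteq> 0" and "w \<in> ball 0 1" using r w by auto
    have "\<rho> * norm w \<le> norm w" using \<rho> by (simp add: mult_left_le_one_le)
    then have "g (f w) \<noteq> 0" using r[OF \<open>f w \<noteq> 0\<close>] contr_r[OF w] w by auto
    then show ?thesis
      unfolding R_def using g_transport h_transport \<open>w \<in> ball 0 1\<close> \<open>f w \<noteq> 0\<close>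
      by (intro ratio_eq_if_transported)
  qed (simp add: f(2))
  have "isCont R 0" unfolding R_def[abs_def] by (rule isCont_divide[OF cont(2,1) \<open>g 0 \<noteq> 0\<close>])
  have "h w = h 0 / g 0 * g w" if "w \<in> ball 0 r" for w
  proof -
    have "g w \<noteq> 0" using r \<open>g 0 \<noteq> 0\<close> that by (cases "w = 0") auto
    moreover have "R w = R 0"
      using invariant_constant_near_attracting_fixed_point[OF \<rho>(2,3) contr_r inv \<open>isCont R 0\<close>] that
      by simp
    ultimately show ?thesis by (simp add: R_def field_simps)
  qed
  then show ?thesis using \<open>0 < r\<close> that by blast
qed

lemma holomorphic_proportional_if_transported:
  fixes f g h :: "complex \<Rightarrow> complex"
  assumes f: "(f has_field_derivative m) (at 0)" "f 0 = 0" "m \<noteq> 0" "norm m < 1"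
    and g: "g holomorphic_on ball 0 1" "g 0 \<noteq> 0" and h: "h holomorphic_on ball 0 1"
    and g_transport: "\<And>w. w \<in> ball 0 1 \<Longrightarrow> f w * g (f w) = w * g w * deriv f w"
    and h_transport: "\<And>w. w \<in> ball 0 1 \<Longrightarrow> f w * h (f w) = w * h w * deriv f w"
    and z: "z \<in> ball 0 1"
  shows "h z = h 0 / g 0 * g z"
proof -
  have "isCont g 0" "isCont h 0"
    using g(1) h by (metis centre_in_ball continuous_on_eq_continuous_at holomorphic_on_imp_continuous_on
        open_ball zero_less_one)+
  then obtain r where "0 < r" and near: "\<And>w. w \<in> ball 0 r \<Longrightarrow> h w = h 0 / g 0 * g w"
    using proportional_near_attracting_fixed_point[OF f _ _ g(2) g_transport h_transport] by blast
  show ?thesis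
  proof (rule analytic_continuation_open[where s = "ball 0 (min r 1)" and s' = "ball 0 1"
        and f = h and g = "\<lambda>z. h 0 / g 0 * g z"])
    show "(\<lambda>z. h 0 / g 0 * g z) holomorphic_on ball 0 1" by (intro holomorphic_intros g(1))
    show "h w = h 0 / g 0 * g w" if "w \<in> ball 0 (min r 1)" for w
      using that by (intro near) simp
  qed (use \<open>0 < r\<close> h z in auto)
qed

lemma linear_ode_solution:
  fixes x b :: "real \<Rightarrow> complex"
  assumes "0 \<le> T" and b: "continuous_on {0..T} b"
    and x: "\<And>t. t \<in> {0..T} \<Longrightarrow> (x has_vector_derivative x t * b t) (at t within {0..T})"
  shows "x T = x 0 * exp (integral {0..T} b)"
proof -
  define I where "I t = integral {0..t} b" for t
  have I: "(I has_vector_derivative b t) (at t within {0..T})" if "t \<in> {0..T}" for t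
    unfolding I_def by (rule integral_has_vector_derivative[OF b that])
  have "((\<lambda>t. x t * exp (- I t)) has_vector_derivative 0) (at t within {0..T})"
    if t: "t \<in> {0..T}" for t
  proof -
    have "((exp \<circ> (\<lambda>s. - I s)) has_vector_derivative (- b t) * exp (- I t)) (at t within {0..T})"
      by (rule field_vector_diff_chain_within[OF has_vector_derivative_minus[OF I[OF t]]])
         (rule has_field_derivative_at_within[OF DERIV_exp])
    from has_vector_derivative_mult[OF x[OF t] this]
    have "((\<lambda>t. x t * exp (- I t)) has_vector_derivative
        x t * (- b t * exp (- I t)) + x t * b t * exp (- I t)) (at t within {0..T})"
      by (simp add: o_def)
    moreover have "x t * (- b t * exp (- I t)) + x t * b t * exp (- I t) = 0"
      by (simp add: algebra_simps)
    ultimately show ?thesis by simp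
  qed
  then obtain c where c: "\<And>t. t \<in> {0..T} \<Longrightarrow> x t * exp (- I t) = c"
    by (rule has_vector_derivative_zero_constant[OF convex_real_interval(5)]) blast+
  have "x T * exp (- I T) = x 0" using c[of 0] c[of T] \<open>0 \<le> T\<close> by (simp add: I_def)
  then have "x T = x 0 * exp (I T)" by (metis exp_minus_inverse mult.assoc mult.right_neutral)
  then show ?thesis by (simp add: I_def)
qed

locale monotone_flow =
  fixes \<nu> :: "real \<Rightarrow> complex measure" and B :: "complex \<Rightarrow> complex"
  assumes semigroup: "monotone_semigroup \<nu>"
    and start: "\<nu> 0 = return borel 1"
    and holomorphic_generator: "B holomorphic_on ball 0 1"
    and flow_equation: "\<forall>t\<ge>0. \<forall>z\<in>ball 0 1. ((\<lambda>s. eta_fun (\<nu> s) z) has_vector_derivative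
            eta_fun (\<nu> t) z * B (eta_fun (\<nu> t) z)) (at t within {0..})"
begin

abbreviation \<eta> :: "real \<Rightarrow> complex \<Rightarrow> complex" where "\<eta> t \<equiv> eta_fun (\<nu> t)"

lemma circle_prob: "0 \<le> t \<Longrightarrow> circle_prob (\<nu> t)"
  using semigroup by (simp add: monotone_semigroup_def)

lemma \<eta>_add: "0 \<le> s \<Longrightarrow> 0 \<le> t \<Longrightarrow> norm z < 1 \<Longrightarrow> \<eta> (s + t) z = \<eta> s (\<eta> t z)"
  using semigroup by (simp add: monotone_semigroup_def)

lemma \<eta>_0: "norm z < 1 \<Longrightarrow> \<eta> 0 z = z"
  using eta_fun_return[of 1 z] start by simp

lemma norm_\<eta>_less_one: "0 \<le> t \<Longrightarrow> norm z < 1 \<Longrightarrow> norm (\<eta> t z) < 1"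
  by (rule norm_eta_fun_less_one[OF circle_prob])

lemma norm_\<eta>_le: "0 \<le> t \<Longrightarrow> norm z < 1 \<Longrightarrow> norm (\<eta> t z) \<le> norm z"
  by (rule Schwarz_Lemma(1)[OF eta_fun_holomorphic[OF circle_prob] eta_fun_0])
     (auto intro: norm_\<eta>_less_one)

lemma \<eta>_has_vector_derivative:
  "0 \<le> t \<Longrightarrow> norm z < 1 \<Longrightarrow>
    ((\<lambda>s. \<eta> s z) has_vector_derivative \<eta> t z * B (\<eta> t z)) (at t within {0..})"
  using flow_equation by simp

lemma continuous_on_generator_along_flow:
  assumes "norm z < 1"
  shows "continuous_on {0..} (\<lambda>s. B (\<eta> s z))"
proof (rule continuous_on_compose2[OF holomorphic_on_imp_continuous_on[OF holomorphic_generator]])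
  show "continuous_on {0..} (\<lambda>s. \<eta> s z)"
    unfolding continuous_on_eq_continuous_within
    using \<eta>_has_vector_derivative assms has_vector_derivative_continuous by fastforce
qed (use norm_\<eta>_less_one assms in auto)

lemma \<eta>_eq_exp_integral:
  assumes "norm z < 1" "0 \<le> T"
  shows "\<eta> T z = z * exp (integral {0..T} (\<lambda>s. B (\<eta> s z)))"
proof -
  have "\<eta> T z = \<eta> 0 z * exp (integral {0..T} (\<lambda>s. B (\<eta> s z)))"
  proof (rule linear_ode_solution)
    show "continuous_on {0..T} (\<lambda>s. B (\<eta> s z))"
      using continuous_on_generator_along_flow[OF assms(1)] by (rule continuous_on_subset) auto
    fix t assume "t \<in> {0..T}"
    then show "((\<lambda>s. \<eta> s z) has_vector_derivative \<eta> t z * B (\<eta> t z)) (at t within {0..T})"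
      using \<eta>_has_vector_derivative[of t z] assms
      by (auto intro: has_vector_derivative_within_subset)
  qed (use assms in simp)
  then show ?thesis using \<eta>_0[OF assms(1)] by simp
qed

lemma integral_generator_along_flow_tendsto:
  "((\<lambda>z. integral {0..1} (\<lambda>s. B (\<eta> s z))) \<longlongrightarrow> B 0) (at 0)"
proof (rule tendstoI)
  fix e :: real assume "0 < e"
  have "isCont B 0"
    using holomorphic_generator
    by (metis centre_in_ball continuous_on_eq_continuous_at holomorphic_on_imp_continuous_on
        open_ball zero_less_one)
  then obtain d where "0 < d" and d: "\<And>w. dist w 0 < d \<Longrightarrow> dist (B w) (B 0) < e / 2"
    using \<open>0 < e\<close> by (metis continuous_at_eps_delta half_gt_zero)
  have "dist (integral {0..1} (\<lambda>s. B (\<eta> s z))) (B 0) < e" if z: "norm z < min d 1" for z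
  proof -
    have "(\<lambda>s. B (\<eta> s z)) integrable_on {0..1}"
      using continuous_on_generator_along_flow[of z] z
      by (intro integrable_continuous_real) (auto elim: continuous_on_subset)
    then have "((\<lambda>s. B (\<eta> s z) - B 0) has_integral
        integral {0..1} (\<lambda>s. B (\<eta> s z)) - B 0) (cbox 0 1)"
      using has_integral_diff[OF integrable_integral has_integral_const_real[of "B 0" 0 1]]
      by simp
    moreover have "norm (B (\<eta> s z) - B 0) \<le> e / 2" if "s \<in> cbox 0 1" for s
      using d[of "\<eta> s z"] norm_\<eta>_le[of s z] that z by (simp add: dist_norm)
    ultimately have "norm (integral {0..1} (\<lambda>s. B (\<eta> s z)) - B 0) \<le> e / 2"
      using has_integral_bound[of "e / 2" "\<lambda>s. B (\<eta> s z) - B 0" _ 0 "1::real"] \<open>0 < e\<close> by auto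
    then show ?thesis using \<open>0 < e\<close> by (simp add: dist_norm)
  qed
  then show "\<forall>\<^sub>F z in at 0. dist (integral {0..1} (\<lambda>s. B (\<eta> s z))) (B 0) < e"
    using \<open>0 < d\<close> unfolding eventually_at by (intro exI[of _ "min d 1"]) auto
qed

lemma exp_generator_0: "exp (B 0) = (\<integral>\<zeta>. \<zeta> \<partial>\<nu> 1)"
proof -
  have "((\<lambda>z. exp (integral {0..1} (\<lambda>s. B (\<eta> s z)))) \<longlongrightarrow> exp (B 0)) (at 0)"
    by (rule tendsto_exp[OF integral_generator_along_flow_tendsto])
  moreover have "\<forall>\<^sub>F z in at 0. exp (integral {0..1} (\<lambda>s. B (\<eta> s z))) = \<eta> 1 z / z"
    using eventually_at_ball'[OF zero_less_one, of 0 UNIV] by eventually_elim (simp add: \<eta>_eq_exp_integral)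
  ultimately have "((\<lambda>z. \<eta> 1 z / z) \<longlongrightarrow> exp (B 0)) (at 0)"
    by (rule Lim_transform_eventually)
  moreover have "((\<lambda>z. \<eta> 1 z / z) \<longlongrightarrow> (\<integral>\<zeta>. \<zeta> \<partial>\<nu> 1)) (at 0)"
    using eta_fun_has_field_derivative_0[OF circle_prob[of 1]] by (simp add: has_field_derivative_iff)
  ultimately show ?thesis by (rule tendsto_unique[rotated]) simp
qed

text \<open>Differentiate \<open>\<eta>\<^sub>1\<^sub>+\<^sub>t(w) = \<eta>\<^sub>1(\<eta>\<^sub>t(w))\<close> at \<open>t = 0\<close>.\<close>

lemma \<eta>_1_transport:
  assumes w: "norm w < 1"
  shows "\<eta> 1 w * B (\<eta> 1 w) = w * B w * deriv (\<eta> 1) w"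
proof -
  have d: "(\<eta> 1 has_field_derivative deriv (\<eta> 1) w) (at w)"
    using eta_fun_holomorphic[OF circle_prob] w by (intro holomorphic_derivI[where S = "ball 0 1"]) auto
  have shift: "((\<lambda>t::real. 1 + t) has_vector_derivative 1) (at 0 within {0..})"
    using has_vector_derivative_add[OF has_vector_derivative_const has_vector_derivative_id] by simp
  have "((\<lambda>s. \<eta> s w) has_vector_derivative \<eta> 1 w * B (\<eta> 1 w)) (at 1 within (\<lambda>t. 1 + t) ` {0..})"
    by (rule has_vector_derivative_within_subset[OF \<eta>_has_vector_derivative]) (use w in auto)
  then have "(((\<lambda>s. \<eta> s w) \<circ> (\<lambda>t. 1 + t)) has_vector_derivative \<eta> 1 w * B (\<eta> 1 w)) (at 0 within {0..})"
    using vector_diff_chain_within[OF shift, of "\<lambda>s. \<eta> s w"] by simp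
  moreover have "(((\<lambda>s. \<eta> s w) \<circ> (\<lambda>t. 1 + t)) has_vector_derivative w * B w * deriv (\<eta> 1) w)
      (at 0 within {0..})"
  proof (rule has_vector_derivative_transform_within[OF _ zero_less_one])
    show "((\<eta> 1 \<circ> (\<lambda>s. \<eta> s w)) has_vector_derivative w * B w * deriv (\<eta> 1) w) (at 0 within {0..})"
      using \<eta>_has_vector_derivative[of 0 w] w \<eta>_0[OF w] d
      by (intro field_vector_diff_chain_within) (auto intro: has_field_derivative_at_within)
  qed (use \<eta>_add w in auto)
  moreover have "at (0::real) within {0..} \<noteq> bot" by (simp add: at_within_Ici_at_right)
  ultimately show ?thesis by (simp add: vector_derivative_unique_within)
qed

lemma norm_\<eta>_eq_if_dirac:
  assumes "is_dirac (\<nu> 1)" "t \<in> {0..1}" "norm z < 1"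
  shows "norm (\<eta> t z) = norm z"
proof (rule antisym)
  show "norm (\<eta> t z) \<le> norm z" using norm_\<eta>_le assms by simp
  obtain \<zeta> where \<zeta>: "\<nu> 1 = return borel \<zeta>" using assms(1) by (auto simp: is_dirac_def)
  then have "norm \<zeta> = 1" using circle_prob[of 1] norm_eq_1_if_circle_prob_return by simp
  then have "norm z = norm (\<eta> (1 - t + t) z)" using \<zeta> assms(3) by (simp add: eta_fun_return norm_mult)
  also have "\<dots> = norm (\<eta> (1 - t) (\<eta> t z))" using assms by (subst \<eta>_add) auto
  also have "\<dots> \<le> norm (\<eta> t z)" using assms by (intro norm_\<eta>_le norm_\<eta>_less_one) auto
  finally show "norm z \<le> norm (\<eta> t z)" .
qed

text \<open>If \<open>\<nu>\<^sub>1\<close> is a point mass, \<open>Re \<integral>\<^sub>0\<^sup>t B(\<eta>\<^sub>s(z)) ds\<close> vanishes on \<open>[0, 1]\<close>,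
  and its derivative at \<open>t = 0\<close> is \<open>Re B(z)\<close>.\<close>

lemma Re_generator_eq_0_if_dirac:
  assumes dirac: "is_dirac (\<nu> 1)" and z: "norm z < 1" "z \<noteq> 0"
  shows "Re (B z) = 0"
proof -
  define I where "I t = integral {0..t} (\<lambda>s. B (\<eta> s z))" for t
  have "continuous_on {0..1} (\<lambda>s. B (\<eta> s z))"
    using continuous_on_generator_along_flow[OF z(1)] by (rule continuous_on_subset) auto
  then have "(I has_vector_derivative B (\<eta> 0 z)) (at 0 within {0..1})"
    unfolding I_def by (rule integral_has_vector_derivative) simp
  then have "((\<lambda>t. Re (I t)) has_vector_derivative Re (B z)) (at 0 within {0..1})"
    using \<eta>_0[OF z(1)] by (simp add: bounded_linear.has_vector_derivative[OF bounded_linear_Re])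
  moreover have "Re (I t) = 0" if t: "t \<in> {0..1}" for t
  proof -
    have "norm z = norm z * exp (Re (I t))"
      using norm_\<eta>_eq_if_dirac[OF dirac t z(1)] \<eta>_eq_exp_integral[OF z(1)] t
      by (simp add: I_def norm_mult)
    then show ?thesis using z(2) by simp
  qed
  then have "((\<lambda>t. Re (I t)) has_vector_derivative 0) (at 0 within {0..1})"
    by (intro has_vector_derivative_transform_within[OF has_vector_derivative_const zero_less_one])
       auto
  moreover have "at (0::real) within {0..1} \<noteq> bot" by (simp add: at_within_Icc_at_right)
  ultimately show ?thesis by (simp add: vector_derivative_unique_within)
qed

lemma generator_constant_if_dirac:
  assumes "is_dirac (\<nu> 1)" "z \<in> ball 0 1"
  shows "B z = B 0"
proof -
  have "B constant_on ball 0 1"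
    using holomorphic_generator Re_generator_eq_0_if_dirac[OF assms(1)]
    by (intro holomorphic_constant_on_if_Re_eq_0[where U = "ball 0 1 - {0}" and u = "1 / 2"]) auto
  then show ?thesis using assms(2) by (auto simp: constant_on_def)
qed

lemma generators_proportional_if_not_dirac:
  assumes "monotone_flow \<nu>' B'" "\<nu>' 1 = \<nu> 1" "\<not> is_dirac (\<nu> 1)" "z \<in> ball 0 1"
  shows "B 0 \<noteq> 0" "B' z = B' 0 / B 0 * B z"
proof -
  interpret flow': monotone_flow \<nu>' B' by (fact assms(1))
  define m where "m = (\<integral>\<zeta>. \<zeta> \<partial>\<nu> 1)"
  have "norm m \<noteq> 1"
    using circle_prob_eq_return_first_moment[OF circle_prob[of 1]] assms(3)
    by (auto simp: m_def is_dirac_def)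
  then have m: "norm m < 1" using norm_first_moment_le[OF circle_prob[of 1]] by (simp add: m_def)
  moreover have "m = exp (B 0)" using exp_generator_0 by (simp add: m_def)
  ultimately show "B 0 \<noteq> 0" by auto
  show "B' z = B' 0 / B 0 * B z"
  proof (rule holomorphic_proportional_if_transported)
    show "(\<eta> 1 has_field_derivative m) (at 0)"
      unfolding m_def by (rule eta_fun_has_field_derivative_0[OF circle_prob]) simp
    show "m \<noteq> 0" using \<open>m = exp (B 0)\<close> by simp
    show "\<And>w. w \<in> ball 0 1 \<Longrightarrow> \<eta> 1 w * B' (\<eta> 1 w) = w * B' w * deriv (\<eta> 1) w"
      using flow'.\<eta>_1_transport assms(2) by simp
  qed (use m holomorphic_generator flow'.holomorphic_generator \<open>B 0 \<noteq> 0\<close> \<eta>_1_transport assms(4)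
       in auto)
qed

end

theorem theorem5p8:
  fixes \<nu> \<nu>' :: "real \<Rightarrow> complex measure" and B2 B2' :: "complex \<Rightarrow> complex"
  assumes "monotone_semigroup \<nu>" and "monotone_semigroup \<nu>'"
    and "\<nu> 0 = return borel 1" and "\<nu>' 0 = return borel 1"
    and "\<nu> 1 = \<nu>' 1" and "\<nu> 1 \<noteq> circle_haar"
    and "B2 holomorphic_on ball 0 1" and "B2' holomorphic_on ball 0 1"
    and "\<forall>z\<in>ball 0 1. Re (B2 z) \<le> 0" and "\<forall>z\<in>ball 0 1. Re (B2' z) \<le> 0"
    and "\<forall>t\<ge>0. \<forall>z\<in>ball 0 1. ((\<lambda>s. eta_fun (\<nu> s) z) has_vector_derivative
            eta_fun (\<nu> t) z * B2 (eta_fun (\<nu> t) z)) (at t within {0..})"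
    and "\<forall>t\<ge>0. \<forall>z\<in>ball 0 1. ((\<lambda>s. eta_fun (\<nu>' s) z) has_vector_derivative
            eta_fun (\<nu>' t) z * B2' (eta_fun (\<nu>' t) z)) (at t within {0..})"
  shows "(\<not> is_dirac (\<nu> 1) \<longrightarrow>
            (\<exists>n::int. \<forall>z\<in>ball 0 1. B2' z = (1 + 2 * pi * \<i> * of_int n / B2 0) * B2 z))
       \<and> (is_dirac (\<nu> 1) \<longrightarrow>
            (\<exists>n::int. \<forall>z\<in>ball 0 1. B2' z = B2 z + 2 * pi * \<i> * of_int n))"
proof -
  have flow_\<nu>: "monotone_flow \<nu> B2" and flow_\<nu>': "monotone_flow \<nu>' B2'"
    using assms(1-4,7,8,11,12) by (simp_all add: monotone_flow_def)
  interpret flow: monotone_flow \<nu> B2 by (fact flow_\<nu>)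
  interpret flow': monotone_flow \<nu>' B2' by (fact flow_\<nu>')
  have "exp (B2' 0) = exp (B2 0)"
    using flow.exp_generator_0 flow'.exp_generator_0 assms(5) by simp
  then obtain n :: int where "B2' 0 = B2 0 + of_int (2 * n) * pi * \<i>"
    unfolding exp_eq by blast
  then have n: "B2' 0 = B2 0 + 2 * pi * \<i> * of_int n" by simp
  show ?thesis
  proof (intro conjI impI exI[of _ n] ballI)
    fix z :: complex assume z: "z \<in> ball 0 1" and dirac: "is_dirac (\<nu> 1)"
    have "B2 z = B2 0" by (rule flow.generator_constant_if_dirac[OF dirac z])
    moreover have "B2' z = B2' 0"
      using flow'.generator_constant_if_dirac[OF _ z] dirac assms(5) by simp
    ultimately show "B2' z = B2 z + 2 * pi * \<i> * of_int n" using n by simp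
  next
    fix z :: complex assume z: "z \<in> ball 0 1" and not_dirac: "\<not> is_dirac (\<nu> 1)"
    note proportional =
      flow.generators_proportional_if_not_dirac[OF flow_\<nu>' assms(5)[symmetric] not_dirac z]
    have "B2 0 \<noteq> 0" and "B2' z = B2' 0 / B2 0 * B2 z" by (fact proportional(1), fact proportional(2))
    moreover have "B2' 0 / B2 0 = 1 + 2 * pi * \<i> * of_int n / B2 0"
      using n \<open>B2 0 \<noteq> 0\<close> by (simp add: add_divide_distrib)
    ultimately show "B2' z = (1 + 2 * pi * \<i> * of_int n / B2 0) * B2 z" by simp
  qed
qed

end
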